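(* Let $k\ge2$ be an integer, $0\le\alpha\le1$, $N\ge2$, $X\ge1$, and let $a_1,\dots,a_N$ be complex numbers. Writing $e(x)=e^{2\pi ix}$, \[ \int_X^{2X}x^\alpha\Big|\sum_{1\le n\le N}a_n\,e(k\sqrt[k]{nx})\Big|^2dx=\sum_{1\le n\le N}|a_n|^2\cdot\Big(\frac{2^{1+\alpha}-1}{1+\alpha}X^{1+\alpha}+O\big(X^{1+\alpha-\frac1k}N^{1-\frac1k}\log N\big)\Big). \]
   Context: The implied constant may depend on $k$ and $\alpha$ but not on $X$, $N$ or the $a_n$. *)

theory Defs
  imports "HOL-Analysis.Analysis"
begin

definition e :: "real \<Rightarrow> complex" where
  "e x = exp (2 * pi * \<i> * complex_of_real x)"

end

theory Submission
  imports Defs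
begin

text \<open>
  Expanding the square gives a double sum over m, n of a_m cnj(a_n) times the integral of
  x^\<alpha> e((c_m - c_n) x^(1/k)), where c_n = k n^(1/k). The diagonal yields the main term.
  Off the diagonal, one integration by parts bounds the integral by O(k X^(1+\<alpha>-1/k) / |c_m - c_n|).
  After 2|a_m a_n| \<le> |a_m|^2 + |a_n|^2 it remains to bound \<Sum>_{n\<noteq>m} 1/|c_m - c_n|; the mean value
  estimate |m - n| \<le> N^(1-1/k) |c_m - c_n| reduces this to a harmonic sum, which is O(log N).
\<close>

lemma has_vector_derivative_e:
  assumes "(g has_real_derivative g') (at x)"
  shows "((\<lambda>x. e (g x)) has_vector_derivative e (g x) * (2 * pi * \<i> * of_real g')) (at x)"
proof -
  have "((\<lambda>x. 2 * pi * \<i> * complex_of_real (g x)) has_vector_derivative 2 * pi * \<i> * of_real g') (at x)"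
    by (intro derivative_eq_intros) (use assms in auto)
  from field_vector_diff_chain_at[OF this DERIV_exp]
  show ?thesis by (simp add: e_def o_def mult.commute)
qed

lemma norm_e [simp]: "norm (e a) = 1"
  unfolding e_def by (simp add: norm_exp_eq_Re)

lemma continuous_on_e [continuous_intros]: "continuous_on S g \<Longrightarrow> continuous_on S (\<lambda>x. e (g x))"
  unfolding e_def by (intro continuous_intros)

lemma e_0 [simp]: "e 0 = 1"
  by (simp add: e_def)

lemma e_mult_cnj: "e a * cnj (e b) = e (a - b)"
  unfolding e_def by (simp add: exp_cnj exp_add[symmetric] algebra_simps)

lemma norm_integral_le_antiderivative:
  fixes f g F :: "real \<Rightarrow> 'a::banach"
  assumes "a \<le> b"
    and F: "\<And>x. x \<in> {a..b} \<Longrightarrow> (F has_vector_derivative f x + g x) (at x within {a..b})"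
    and g: "continuous_on {a..b} g" and B: "\<And>x. x \<in> {a..b} \<Longrightarrow> norm (g x) \<le> B"
  shows "norm (integral {a..b} f) \<le> norm (F b) + norm (F a) + B * (b - a)"
proof -
  have "((\<lambda>x. f x + g x) has_integral F b - F a) {a..b}"
    by (rule fundamental_theorem_of_calculus[OF \<open>a \<le> b\<close> F])
  from has_integral_diff[OF this integrable_integral[OF integrable_continuous_real[OF g]]]
  have "integral {a..b} f = F b - F a - integral {a..b} g"
    by (simp add: integral_unique)
  moreover have "norm (integral {a..b} g) \<le> B * (b - a)"
    by (rule integral_bound[OF \<open>a \<le> b\<close> g B])
  ultimately show ?thesis
    by (metis add_mono norm_triangle_ineq4 norm_triangle_le_diff order_refl)
qed

lemma has_vector_derivative_powr_e_root:
  fixes \<beta> d :: real and k :: nat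
  assumes "x > 0" and "k \<ge> 1"
  shows "((\<lambda>x. of_real (x powr \<beta>) * e (d * x powr (1 / k))) has_vector_derivative
           (of_real (x powr (\<beta> + 1 / k - 1)) * (2 * pi * \<i> * of_real (d / k))
            + of_real (\<beta> * x powr (\<beta> - 1))) * e (d * x powr (1 / k))) (at x)"
proof -
  have "((\<lambda>x. d * x powr (1 / k)) has_real_derivative d * (1 / k * x powr (1 / k - 1))) (at x)"
    using assms by (intro derivative_eq_intros) auto
  note de = has_vector_derivative_e[OF this]
  have "((\<lambda>x. complex_of_real (x powr \<beta>)) has_vector_derivative of_real (\<beta> * x powr (\<beta> - 1))) (at x)"
    using assms by (intro derivative_eq_intros) auto
  from has_vector_derivative_mult[OF this de]
  show ?thesis
  proof (rule has_vector_derivative_eq_rhs)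
    have "x powr (\<beta> + 1 / k - 1) = x powr \<beta> * x powr (1 / k - 1)"
      using assms by (simp add: powr_add[symmetric] add_diff_eq)
    then show "of_real (x powr \<beta>) * (e (d * x powr (1 / k)) * (2 * pi * \<i> * of_real (d * (1 / k * x powr (1 / k - 1)))))
        + of_real (\<beta> * x powr (\<beta> - 1)) * e (d * x powr (1 / k))
      = (of_real (x powr (\<beta> + 1 / k - 1)) * (2 * pi * \<i> * of_real (d / k))
            + of_real (\<beta> * x powr (\<beta> - 1))) * e (d * x powr (1 / k))"
      by (simp add: algebra_simps)
  qed
qed

lemma powr_le_on_dyadic_interval:
  fixes x X \<beta> :: real
  assumes "x \<in> {X..2*X}" and "X > 0" and "0 \<le> \<beta>" and "\<beta> \<le> 2"
  shows "x powr \<beta> \<le> 4 * X powr \<beta>"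
proof -
  have "x powr \<beta> \<le> (2 * X) powr \<beta>"
    using assms by (intro powr_mono2) auto
  also have "\<dots> = 2 powr \<beta> * X powr \<beta>"
    using assms by (simp add: powr_mult)
  also have "2 powr \<beta> \<le> 2 powr 2"
    using assms by (intro powr_mono) auto
  finally show ?thesis
    by (simp add: mult_right_mono)
qed

lemma norm_integral_powr_e_root_le:
  fixes k :: nat and \<alpha> d X :: real
  assumes "k \<ge> 1" and "0 \<le> \<alpha>" and "\<alpha> \<le> 1" and "d \<noteq> 0" and "X > 0"
  shows "norm (integral {X..2*X} (\<lambda>x. of_real (x powr \<alpha>) * e (d * root k x)))
           \<le> 3 * real k * X powr (1 + \<alpha> - 1 / k) / \<bar>d\<bar>"
proof -
  txt \<open>\<open>F\<close> is an antiderivative of the integrand up to the error \<open>g\<close>, which is smaller by a factor \<open>1/x\<close>.\<close>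
  define \<beta> where "\<beta> = 1 + \<alpha> - 1 / k"
  have "0 \<le> 1 / real k" "1 / real k \<le> 1"
    using assms by auto
  then have \<beta>: "0 \<le> \<beta>" "\<beta> \<le> 2"
    using assms unfolding \<beta>_def by linarith+
  define c where "c = inverse (2 * pi * \<i> * of_real (d / k))"
  have norm_c: "norm c = k / (2 * pi * \<bar>d\<bar>)"
    using assms by (simp add: c_def norm_mult norm_divide)
  define E where "E x = e (d * x powr (1 / k))" for x
  define F where "F x = of_real (x powr \<beta>) * E x * c" for x
  define g where "g x = of_real (\<beta> * x powr (\<beta> - 1)) * E x * c" for x
  have F': "(F has_vector_derivative of_real (x powr \<alpha>) * E x + g x) (at x within {X..2*X})"
    if "x \<in> {X..2*X}" for x
  proof -
    have "x > 0" using that assms by auto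
    from has_vector_derivative_mult_left[OF has_vector_derivative_powr_e_root[OF this \<open>k \<ge> 1\<close>, of \<beta> d],
        where a = c]
    show ?thesis
      unfolding F_def E_def g_def c_def \<beta>_def using assms
      by (auto intro: has_vector_derivative_at_within simp: field_simps)
  qed
  have g_bound: "norm (g x) \<le> 8 * X powr \<beta> / X * norm c" if x: "x \<in> {X..2*X}" for x
  proof -
    have "\<beta> * x powr (\<beta> - 1) = \<beta> * (x powr \<beta> / x)"
      using x assms by (simp add: powr_diff)
    also have "\<dots> \<le> 2 * (4 * X powr \<beta> / X)"
      using x assms \<beta> powr_le_on_dyadic_interval[OF x _ \<beta>]
      by (intro mult_mono frac_le) auto
    also have "\<dots> = 8 * X powr \<beta> / X"
      by simp
    finally have "\<beta> * x powr (\<beta> - 1) * norm c \<le> 8 * X powr \<beta> / X * norm c"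
      by (rule mult_right_mono) simp
    then show ?thesis
      using \<beta> by (simp add: g_def E_def norm_mult)
  qed
  have "norm (integral {X..2*X} (\<lambda>x. of_real (x powr \<alpha>) * E x))
          \<le> norm (F (2*X)) + norm (F X) + 8 * X powr \<beta> / X * norm c * (2*X - X)"
    by (rule norm_integral_le_antiderivative[OF _ F' _ g_bound])
       (use assms in \<open>auto simp: g_def E_def intro!: continuous_intros\<close>)
  also have "\<dots> \<le> 13 / (2 * pi) * (k * X powr \<beta> / \<bar>d\<bar>)"
    using assms powr_le_on_dyadic_interval[of "2*X" X \<beta>] \<beta>
    by (simp add: F_def E_def norm_mult norm_c field_simps)
  also have "\<dots> \<le> 3 * (k * X powr \<beta> / \<bar>d\<bar>)"
    using pi_gt3 by (intro mult_right_mono) (auto simp: field_simps)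
  also have "integral {X..2*X} (\<lambda>x. of_real (x powr \<alpha>) * E x)
      = integral {X..2*X} (\<lambda>x. of_real (x powr \<alpha>) * e (d * root k x))"
    using assms by (intro integral_cong) (simp add: E_def root_powr_inverse)
  finally show ?thesis
    by (simp add: \<beta>_def)
qed

lemma integral_powr_dyadic:
  fixes \<alpha> X :: real
  assumes "\<alpha> > -1" and "X > 0"
  shows "integral {X..2*X} (\<lambda>x. x powr \<alpha>) = (2 powr (1 + \<alpha>) - 1) / (1 + \<alpha>) * X powr (1 + \<alpha>)"
proof -
  have "((\<lambda>x. x powr \<alpha>) has_integral (2*X) powr (1 + \<alpha>) / (1 + \<alpha>) - X powr (1 + \<alpha>) / (1 + \<alpha>)) {X..2*X}"
  proof (rule fundamental_theorem_of_calculus)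
    fix x assume "x \<in> {X..2*X}"
    then have "((\<lambda>x. x powr (1 + \<alpha>) / (1 + \<alpha>)) has_real_derivative x powr \<alpha>) (at x)"
      using assms by (auto intro!: derivative_eq_intros)
    then show "((\<lambda>x. x powr (1 + \<alpha>) / (1 + \<alpha>)) has_vector_derivative x powr \<alpha>) (at x within {X..2*X})"
      by (simp add: has_real_derivative_iff_has_vector_derivative has_vector_derivative_at_within)
  qed (use assms in simp)
  then have "integral {X..2*X} (\<lambda>x. x powr \<alpha>) = (2*X) powr (1 + \<alpha>) / (1 + \<alpha>) - X powr (1 + \<alpha>) / (1 + \<alpha>)"
    by (rule integral_unique)
  also have "\<dots> = (2 powr (1 + \<alpha>) - 1) / (1 + \<alpha>) * X powr (1 + \<alpha>)"
    using assms by (simp add: powr_mult diff_divide_distrib left_diff_distrib)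
  finally show ?thesis .
qed

lemma norm_sum_e_squared:
  fixes a :: "'a \<Rightarrow> complex" and \<theta> :: "'a \<Rightarrow> real"
  shows "of_real ((cmod (\<Sum>n\<in>S. a n * e (\<theta> n)))\<^sup>2)
           = (\<Sum>m\<in>S. \<Sum>n\<in>S. a m * cnj (a n) * e (\<theta> m - \<theta> n))"
proof -
  have "of_real ((cmod (\<Sum>n\<in>S. a n * e (\<theta> n)))\<^sup>2)
          = (\<Sum>m\<in>S. a m * e (\<theta> m)) * (\<Sum>n\<in>S. cnj (a n * e (\<theta> n)))"
    unfolding complex_norm_square cnj_sum by (rule refl)
  also have "\<dots> = (\<Sum>m\<in>S. \<Sum>n\<in>S. a m * e (\<theta> m) * cnj (a n * e (\<theta> n)))"
    by (rule sum_product)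
  also have "\<dots> = (\<Sum>m\<in>S. \<Sum>n\<in>S. a m * cnj (a n) * e (\<theta> m - \<theta> n))"
    by (simp add: e_mult_cnj[symmetric] mult_ac)
  finally show ?thesis .
qed

lemma sum_sum_mult_kernel_le:
  fixes b :: "'a \<Rightarrow> real" and G :: "'a \<Rightarrow> 'a \<Rightarrow> real"
  assumes "\<And>m n. G m n = G n m" and "\<And>m n. G m n \<ge> 0"
  shows "(\<Sum>m\<in>S. \<Sum>n\<in>S. b m * b n * G m n) \<le> (\<Sum>m\<in>S. (b m)\<^sup>2 * (\<Sum>n\<in>S. G m n))"
proof -
  have "(\<Sum>m\<in>S. \<Sum>n\<in>S. b m * b n * G m n)
        \<le> (\<Sum>m\<in>S. \<Sum>n\<in>S. ((b m)\<^sup>2 / 2) * G m n + ((b n)\<^sup>2 / 2) * G m n)"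
  proof (intro sum_mono)
    fix m n
    have "b m * b n \<le> (b m)\<^sup>2 / 2 + (b n)\<^sup>2 / 2"
      using sum_squares_ge_zero[of "b m - b n" 0] by (simp add: power2_eq_square algebra_simps)
    from mult_right_mono[OF this assms(2)]
    show "b m * b n * G m n \<le> (b m)\<^sup>2 / 2 * G m n + (b n)\<^sup>2 / 2 * G m n"
      by (simp add: algebra_simps)
  qed
  also have "\<dots> = (\<Sum>m\<in>S. \<Sum>n\<in>S. (b m)\<^sup>2 / 2 * G m n) + (\<Sum>m\<in>S. \<Sum>n\<in>S. (b n)\<^sup>2 / 2 * G m n)"
    by (simp only: sum.distrib)
  also have "(\<Sum>m\<in>S. \<Sum>n\<in>S. (b n)\<^sup>2 / 2 * G m n) = (\<Sum>m\<in>S. \<Sum>n\<in>S. (b m)\<^sup>2 / 2 * G m n)"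
    by (subst sum.swap) (simp add: assms(1))
  also have "(\<Sum>m\<in>S. \<Sum>n\<in>S. (b m)\<^sup>2 / 2 * G m n) + (\<Sum>m\<in>S. \<Sum>n\<in>S. (b m)\<^sup>2 / 2 * G m n)
      = (\<Sum>m\<in>S. (b m)\<^sup>2 * (\<Sum>n\<in>S. G m n))"
    by (simp add: sum_distrib_left sum_distrib_right mult_ac flip: sum.distrib)
  finally show ?thesis .
qed

lemma integral_mean_square_exp_sum:
  fixes w \<phi> :: "real \<Rightarrow> real" and c :: "'a \<Rightarrow> real" and a :: "'a \<Rightarrow> complex"
  assumes "finite S" and "continuous_on {A..B} w" and "continuous_on {A..B} \<phi>"
  shows "of_real (integral {A..B} (\<lambda>x. w x * (cmod (\<Sum>n\<in>S. a n * e (c n * \<phi> x)))\<^sup>2))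
           = (\<Sum>m\<in>S. \<Sum>n\<in>S. a m * cnj (a n) * integral {A..B} (\<lambda>x. of_real (w x) * e ((c m - c n) * \<phi> x)))"
proof -
  define f where "f x = w x * (cmod (\<Sum>n\<in>S. a n * e (c n * \<phi> x)))\<^sup>2" for x
  have "of_real (f x) = (\<Sum>m\<in>S. \<Sum>n\<in>S. a m * cnj (a n) * (of_real (w x) * e ((c m - c n) * \<phi> x)))" for x
    using norm_sum_e_squared[of a "\<lambda>n. c n * \<phi> x" S]
    by (simp add: f_def sum_distrib_left algebra_simps)
  then have "((\<lambda>x. of_real (f x)) has_integral
      (\<Sum>m\<in>S. \<Sum>n\<in>S. a m * cnj (a n) * integral {A..B} (\<lambda>x. of_real (w x) * e ((c m - c n) * \<phi> x)))) {A..B}"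
    using assms
    by (simp only:) (intro has_integral_sum has_integral_mult_right integrable_integral
        integrable_continuous_real continuous_intros)
  moreover have "((\<lambda>x. complex_of_real (f x)) has_integral of_real (integral {A..B} f)) {A..B}"
    unfolding f_def using assms
    by (intro has_integral_of_real integrable_integral integrable_continuous_real continuous_intros)
  ultimately show ?thesis
    unfolding f_def[abs_def] by (rule has_integral_unique[symmetric])
qed

lemma sum_sum_split_diagonal:
  assumes "finite S"
  shows "(\<Sum>m\<in>S. \<Sum>n\<in>S. T m n) = (\<Sum>m\<in>S. T m m) + (\<Sum>m\<in>S. \<Sum>n\<in>S - {m}. T m n)"
proof -
  have "(\<Sum>m\<in>S. \<Sum>n\<in>S. T m n) = (\<Sum>m\<in>S. T m m + (\<Sum>n\<in>S - {m}. T m n))"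
    using assms by (intro sum.cong refl sum.remove)
  also have "\<dots> = (\<Sum>m\<in>S. T m m) + (\<Sum>m\<in>S. \<Sum>n\<in>S - {m}. T m n)"
    by (rule sum.distrib)
  finally show ?thesis .
qed

lemma mean_square_exp_sum_deviation_le:
  fixes w \<phi> :: "real \<Rightarrow> real" and c :: "'a \<Rightarrow> real" and a :: "'a \<Rightarrow> complex"
  assumes "finite S" and "inj_on c S"
    and "continuous_on {A..B} w" and "continuous_on {A..B} \<phi>"
    and K: "\<And>d. d \<noteq> 0 \<Longrightarrow> norm (integral {A..B} (\<lambda>x. of_real (w x) * e (d * \<phi> x))) \<le> K / \<bar>d\<bar>"
  shows "\<bar>integral {A..B} (\<lambda>x. w x * (cmod (\<Sum>n\<in>S. a n * e (c n * \<phi> x)))\<^sup>2)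
            - (\<Sum>n\<in>S. (cmod (a n))\<^sup>2) * integral {A..B} w\<bar>
         \<le> K * (\<Sum>m\<in>S. (cmod (a m))\<^sup>2 * (\<Sum>n\<in>S - {m}. 1 / \<bar>c m - c n\<bar>))"
proof -
  define f where "f x = w x * (cmod (\<Sum>n\<in>S. a n * e (c n * \<phi> x)))\<^sup>2" for x
  define T where
    "T m n = a m * cnj (a n) * integral {A..B} (\<lambda>x. of_real (w x) * e ((c m - c n) * \<phi> x))" for m n
  have "((\<lambda>x. complex_of_real (w x)) has_integral of_real (integral {A..B} w)) {A..B}"
    by (intro has_integral_of_real integrable_integral integrable_continuous_real assms(3))
  then have "(\<Sum>m\<in>S. T m m) = of_real ((\<Sum>n\<in>S. (cmod (a n))\<^sup>2) * integral {A..B} w)"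
    unfolding T_def of_real_mult of_real_sum sum_distrib_right complex_norm_square
    by (simp add: integral_unique)
  moreover have "of_real (integral {A..B} f) = (\<Sum>m\<in>S. \<Sum>n\<in>S. T m n)"
    unfolding f_def[abs_def] T_def by (rule integral_mean_square_exp_sum[OF assms(1,3,4)])
  ultimately have deviation:
    "of_real (integral {A..B} f - (\<Sum>n\<in>S. (cmod (a n))\<^sup>2) * integral {A..B} w)
       = (\<Sum>m\<in>S. \<Sum>n\<in>S - {m}. T m n)"
    unfolding of_real_diff sum_sum_split_diagonal[OF assms(1), of T] by (metis add_diff_cancel_left')
  define G where "G m n = (if n = m then 0 else 1 / \<bar>c m - c n\<bar>)" for m n
  have "K \<ge> 0"
    using order_trans[OF norm_ge_zero K[of 1]] by simp
  have "norm (T m n) \<le> K * (cmod (a m) * cmod (a n) * G m n)" if "m \<in> S" "n \<in> S - {m}" for m n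
  proof -
    have "c m - c n \<noteq> 0"
      using that \<open>inj_on c S\<close> by (auto dest: inj_onD)
    from mult_left_mono[OF K[OF this], of "cmod (a m) * cmod (a n)"] that
    show ?thesis
      by (simp add: T_def G_def norm_mult mult_ac)
  qed
  then have "norm (\<Sum>m\<in>S. \<Sum>n\<in>S - {m}. T m n)
      \<le> (\<Sum>m\<in>S. \<Sum>n\<in>S - {m}. K * (cmod (a m) * cmod (a n) * G m n))"
    by (intro order_trans[OF norm_sum sum_mono] order_trans[OF norm_sum sum_mono]) auto
  also have "\<dots> = (\<Sum>m\<in>S. \<Sum>n\<in>S. K * (cmod (a m) * cmod (a n) * G m n))"
    using \<open>finite S\<close> by (intro sum.cong[OF refl]) (auto simp: sum_diff1 G_def intro!: sum.cong)
  also have "\<dots> = K * (\<Sum>m\<in>S. \<Sum>n\<in>S. cmod (a m) * cmod (a n) * G m n)"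
    by (simp add: sum_distrib_left)
  also have "\<dots> \<le> K * (\<Sum>m\<in>S. (cmod (a m))\<^sup>2 * (\<Sum>n\<in>S. G m n))"
    by (intro mult_left_mono sum_sum_mult_kernel_le \<open>K \<ge> 0\<close>) (auto simp: G_def)
  also have "\<dots> = K * (\<Sum>m\<in>S. (cmod (a m))\<^sup>2 * (\<Sum>n\<in>S - {m}. 1 / \<bar>c m - c n\<bar>))"
    using \<open>finite S\<close> by (simp add: G_def sum.delta_remove)
  finally show ?thesis
    unfolding deviation[symmetric] norm_of_real f_def[abs_def] .
qed

lemma harm_le_one_plus_ln:
  assumes "n \<ge> 1"
  shows "harm n \<le> 1 + ln (real n)"
  using euler_mascheroni_sequence_decreasing[of 1 n] assms by (simp add: harm_def)

lemma sum_inverse_dist_le_harm: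
  assumes "m \<in> {1..N}"
  shows "(\<Sum>n\<in>{1..N} - {m}. 1 / \<bar>real m - real n\<bar>) \<le> 2 * harm N"
proof -
  have split: "{1..N} - {m} = {1..<m} \<union> {m<..N}"
    using assms by auto
  have "(\<Sum>n\<in>{1..<m}. 1 / \<bar>real m - real n\<bar>) = (\<Sum>j\<in>(\<lambda>n. m - n) ` {1..<m}. inverse (real j))"
    by (subst sum.reindex) (auto simp: inj_on_def of_nat_diff inverse_eq_divide intro!: sum.cong)
  also have "\<dots> \<le> harm N"
    unfolding harm_def using assms by (intro sum_mono2) auto
  finally have below: "(\<Sum>n\<in>{1..<m}. 1 / \<bar>real m - real n\<bar>) \<le> harm N" .
  have "(\<Sum>n\<in>{m<..N}. 1 / \<bar>real m - real n\<bar>) = (\<Sum>j\<in>(\<lambda>n. n - m) ` {m<..N}. inverse (real j))"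
    by (subst sum.reindex) (auto simp: inj_on_def of_nat_diff inverse_eq_divide intro!: sum.cong)
  also have "\<dots> \<le> harm N"
    unfolding harm_def using assms by (intro sum_mono2) auto
  finally have above: "(\<Sum>n\<in>{m<..N}. 1 / \<bar>real m - real n\<bar>) \<le> harm N" .
  show ?thesis
    unfolding split using below above by (subst sum.union_disjoint) auto
qed

lemma abs_power_diff_le:
  fixes x y R :: real
  assumes "0 \<le> x" "x \<le> R" "0 \<le> y" "y \<le> R"
  shows "\<bar>x ^ k - y ^ k\<bar> \<le> k * R ^ (k - 1) * \<bar>x - y\<bar>"
proof -
  have "\<bar>x ^ k - y ^ k\<bar> = \<bar>x - y\<bar> * (\<Sum>i<k. y ^ (k - Suc i) * x ^ i)"
    using assms by (simp add: power_diff_sumr2 abs_mult sum_nonneg)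
  also have "\<dots> \<le> \<bar>x - y\<bar> * (\<Sum>i<k. R ^ (k - 1))"
  proof (intro mult_left_mono sum_mono)
    fix i assume "i \<in> {..<k}"
    then have "R ^ (k - Suc i) * R ^ i = R ^ (k - 1)"
      by (simp flip: power_add)
    moreover have "y ^ (k - Suc i) * x ^ i \<le> R ^ (k - Suc i) * R ^ i"
      using assms by (intro mult_mono power_mono) auto
    ultimately show "y ^ (k - Suc i) * x ^ i \<le> R ^ (k - 1)"
      by simp
  qed simp
  finally show ?thesis
    by (simp add: mult_ac)
qed

lemma dist_le_root_dist:
  fixes k m n N :: nat
  assumes "k \<ge> 1" and "N \<ge> 1" and "m \<le> N" and "n \<le> N"
  shows "\<bar>real m - real n\<bar> \<le> k * real N powr (1 - 1 / k) * \<bar>root k m - root k n\<bar>"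
proof -
  have "real N powr (1 - 1 / k) = root k N ^ (k - 1)"
  proof -
    have "root k N ^ (k - 1) = real N powr (1 / k * real (k - 1))"
      using assms by (simp add: root_powr_inverse powr_realpow[symmetric] powr_powr)
    also have "1 / k * real (k - 1) = 1 - 1 / k"
      using assms by (simp add: of_nat_diff field_simps)
    finally show ?thesis ..
  qed
  moreover have "\<bar>root k m ^ k - root k n ^ k\<bar> \<le> k * root k N ^ (k - 1) * \<bar>root k m - root k n\<bar>"
    using assms by (intro abs_power_diff_le) auto
  ultimately show ?thesis
    using assms by simp
qed

lemma sum_inverse_root_phase_dist_le:
  fixes k m N :: nat
  assumes "k \<ge> 1" and "m \<in> {1..N}" and "N \<ge> 2"
  shows "(\<Sum>n\<in>{1..N} - {m}. 1 / \<bar>k * root k m - k * root k n\<bar>) \<le> 6 * real N powr (1 - 1 / k) * ln N"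
proof -
  define L where "L = real N powr (1 - 1 / k)"
  have "L \<ge> 0"
    by (simp add: L_def)
  have "1 / \<bar>k * root k m - k * root k n\<bar> \<le> L * (1 / \<bar>real m - real n\<bar>)" if "n \<in> {1..N} - {m}" for n
  proof -
    have "\<bar>k * root k m - k * root k n\<bar> = k * \<bar>root k m - root k n\<bar>"
      by (simp flip: right_diff_distrib add: abs_mult)
    then have dist: "\<bar>real m - real n\<bar> \<le> L * \<bar>k * root k m - k * root k n\<bar>"
      unfolding L_def using that assms dist_le_root_dist[of k N m n] by (simp add: mult_ac)
    have "\<bar>real m - real n\<bar> > 0"
      using that by auto
    with dist have "\<bar>k * root k m - k * root k n\<bar> > 0"
      by (metis abs_ge_zero less_le_not_le mult_zero_right order_antisym_conv)
    with \<open>\<bar>real m - real n\<bar> > 0\<close> dist show ?thesis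
      by (simp add: field_simps)
  qed
  then have "(\<Sum>n\<in>{1..N} - {m}. 1 / \<bar>k * root k m - k * root k n\<bar>)
      \<le> L * (\<Sum>n\<in>{1..N} - {m}. 1 / \<bar>real m - real n\<bar>)"
    unfolding sum_distrib_left by (rule sum_mono)
  also have "\<dots> \<le> L * (2 * (1 + ln N))"
    using assms harm_le_one_plus_ln[of N] sum_inverse_dist_le_harm[OF assms(2)]
    by (intro mult_left_mono \<open>L \<ge> 0\<close>) auto
  also have "\<dots> \<le> L * (6 * ln N)"
  proof -
    have "2/3 \<le> ln (2::real)"
      by (rule ln2_ge_two_thirds)
    also have "\<dots> \<le> ln N"
      using assms by simp
    finally show ?thesis
      by (intro mult_left_mono \<open>L \<ge> 0\<close>) simp
  qed
  finally show ?thesis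
    by (simp add: L_def mult_ac)
qed

theorem lemma3p1:
  fixes k :: nat and \<alpha> :: real
  assumes "k \<ge> 2" and "0 \<le> \<alpha>" and "\<alpha> \<le> 1"
  shows "\<exists>C>0. \<forall>(N::nat) (X::real) (a::nat \<Rightarrow> complex).
           N \<ge> 2 \<longrightarrow> X \<ge> 1 \<longrightarrow>
           \<bar>integral {X..2*X}
               (\<lambda>x. x powr \<alpha> * (cmod (\<Sum>n=1..N. a n * e (real k * root k (real n * x))))\<^sup>2)
             - (\<Sum>n=1..N. (cmod (a n))\<^sup>2) * ((2 powr (1+\<alpha>) - 1) / (1+\<alpha>) * X powr (1+\<alpha>))\<bar>
           \<le> C * (\<Sum>n=1..N. (cmod (a n))\<^sup>2) *
               (X powr (1 + \<alpha> - 1 / real k) * real N powr (1 - 1 / real k) * ln (real N))"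
proof (intro exI[of _ "18 * real k"] conjI allI impI)
  fix N :: nat and X :: real and a :: "nat \<Rightarrow> complex"
  assume "N \<ge> 2" and "X \<ge> 1"
  define P where "P = X powr (1 + \<alpha> - 1 / k)"
  define c where "c n = k * root k n" for n :: nat
  have "inj_on c {1..N}"
    using assms by (auto simp: inj_on_def c_def)
  have integrand: "(\<lambda>x::real. x powr \<alpha> * (cmod (\<Sum>n=1..N. a n * e (k * root k (n * x))))\<^sup>2)
      = (\<lambda>x. x powr \<alpha> * (cmod (\<Sum>n=1..N. a n * e (c n * root k x)))\<^sup>2)"
    by (simp add: c_def real_root_mult mult.assoc)
  have M: "integral {X..2*X} (\<lambda>x. x powr \<alpha>) = (2 powr (1+\<alpha>) - 1) / (1+\<alpha>) * X powr (1+\<alpha>)"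
    using assms \<open>X \<ge> 1\<close> by (intro integral_powr_dyadic) auto
  have "\<bar>integral {X..2*X} (\<lambda>x. x powr \<alpha> * (cmod (\<Sum>n=1..N. a n * e (k * root k (n * x))))\<^sup>2)
          - (\<Sum>n=1..N. (cmod (a n))\<^sup>2) * ((2 powr (1+\<alpha>) - 1) / (1+\<alpha>) * X powr (1+\<alpha>))\<bar>
        \<le> 3 * real k * P * (\<Sum>m=1..N. (cmod (a m))\<^sup>2 * (\<Sum>n\<in>{1..N} - {m}. 1 / \<bar>c m - c n\<bar>))"
    unfolding integrand M[symmetric]
    using \<open>X \<ge> 1\<close> assms norm_integral_powr_e_root_le[of k \<alpha> _ X]
    by (intro mean_square_exp_sum_deviation_le \<open>inj_on c {1..N}\<close>)
       (auto simp: P_def intro!: continuous_intros)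
  also have "\<dots> \<le> 3 * real k * P * (\<Sum>m=1..N. (cmod (a m))\<^sup>2 * (6 * real N powr (1 - 1 / k) * ln N))"
    using assms \<open>N \<ge> 2\<close> sum_inverse_root_phase_dist_le[of k _ N]
    by (intro mult_left_mono sum_mono) (auto simp: c_def P_def)
  also have "\<dots> = 18 * real k * (\<Sum>n=1..N. (cmod (a n))\<^sup>2) * (P * real N powr (1 - 1 / k) * ln N)"
    by (simp add: sum_distrib_left sum_distrib_right mult_ac)
  finally show "\<bar>integral {X..2*X}
               (\<lambda>x. x powr \<alpha> * (cmod (\<Sum>n=1..N. a n * e (real k * root k (real n * x))))\<^sup>2)
             - (\<Sum>n=1..N. (cmod (a n))\<^sup>2) * ((2 powr (1+\<alpha>) - 1) / (1+\<alpha>) * X powr (1+\<alpha>))\<bar>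
           \<le> 18 * real k * (\<Sum>n=1..N. (cmod (a n))\<^sup>2) *
               (X powr (1 + \<alpha> - 1 / real k) * real N powr (1 - 1 / real k) * ln (real N))"
    by (simp only: P_def)
qed (use assms in simp)

end
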